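(* Suppose that there exists $\lambda>1$ such that $f:\mathbb Q\to\mathbb C$ has property $\mathscr S(\lambda)$, and let $f^\ast$ be defined by $f^\ast(x)=f(x)$ for $x\in\mathbb Q$ and $f^\ast(x)=\lim_{y\in\mathbb Q\cap\mathfrak T(B),y\to x}f(y)$ for $x\in\mathfrak T(B)\setminus\mathbb Q$, $B>0$ (this limit exists and is independent of $B$). Then, as $q\to\infty$, $$f^\ast(a/q)=f^\ast(x)+o(1)$$ uniformly for all $a\in\mathfrak A_q$ and all $x\in\big(\tfrac{a-q^{1/4}}q,\tfrac{a+q^{1/4}}q\big)\cap\big(\mathfrak T_q\cup\tfrac1q\mathfrak A_q\big)$.
   Context: Continued fractions: $x=[b_0(x);b_1(x),\dots]$, $r(x)$ the length for rational $x$, $r(x)=\infty$ otherwise. $\mathfrak T(B):=\{x\in\mathbb R\colon b_j(x)\leq\max(B,j(\log j)^2)\ \forall 1\leq j\leq r(x)\}$. $V(B,m,x):=\{x'\in\mathbb Q\cap\mathfrak T(B)\colon r(x')\geq m,\ b_j(x')=b_j(x)\ \forall j\leq m\}$. Property $\mathscr S(\lambda)$: $\sup_{x\in\mathfrak T(m^\lambda)}\sup_{x',x''\in V(m^\lambda,m,x)}|f(x')-f(x'')|\to0$ as $m\to\infty$. For $q\geq2$: $\mathfrak A_q:=\{0\leq a<q\colon(a,q)=1,\ a/q\in\mathfrak T((\log q)(\log\log q)^2)\}$ and $\mathfrak T_q:=([0,1)\setminus\mathbb Q)\cap\mathfrak T((\log q)(\log\log q)^2)$; $\frac1q\mathfrak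 A_q=\{a/q\colon a\in\mathfrak A_q\}$. *)

theory Defs
  imports Complex_Main "HOL-Library.Extended_Nat" "HOL-Library.Extended_Real"
begin

fun cf_tail :: "real \<Rightarrow> nat \<Rightarrow> real" where
  "cf_tail x 0 = x"
| "cf_tail x (Suc n) = 1 / frac (cf_tail x n)"

definition cf_b :: "real \<Rightarrow> nat \<Rightarrow> int" where
  "cf_b x j = \<lfloor>cf_tail x j\<rfloor>"

text \<open>Length r(x): the index of the last partial quotient for rational x
  (canonical expansion, last quotient at least 2 when r(x) \<ge> 1), infinity otherwise.\<close>
definition cf_len :: "real \<Rightarrow> enat" where
  "cf_len x = (if \<exists>n. frac (cf_tail x n) = 0
               then enat (LEAST n. frac (cf_tail x n) = 0) else \<infinity>)"

definition cfT :: "real \<Rightarrow> real set" where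
  "cfT B = {x. \<forall>j::nat. 1 \<le> j \<and> enat j \<le> cf_len x \<longrightarrow>
                 real_of_int (cf_b x j) \<le> max B (real j * (ln (real j))\<^sup>2)}"

definition cfV :: "real \<Rightarrow> nat \<Rightarrow> real \<Rightarrow> real set" where
  "cfV B m x = {x'. x' \<in> \<rat> \<and> x' \<in> cfT B \<and> cf_len x' \<ge> enat m \<and>
                    (\<forall>j\<le>m. cf_b x' j = cf_b x j)}"

text \<open>Property S(lambda), for f defined on the rationals (values of f off \<rat> are irrelevant).\<close>
definition propS :: "real \<Rightarrow> (real \<Rightarrow> complex) \<Rightarrow> bool" where
  "propS lam f = ((\<lambda>m::nat. SUP x\<in>cfT (real m powr lam).
        SUP p\<in>cfV (real m powr lam) m x \<times> cfV (real m powr lam) m x.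
          ereal (cmod (f (fst p) - f (snd p)))) \<longlonglongrightarrow> 0)"

definition f_star :: "(real \<Rightarrow> complex) \<Rightarrow> real \<Rightarrow> complex" where
  "f_star f x = (if x \<in> \<rat> then f x
     else (THE L. \<exists>B>0. x \<in> cfT B \<and> (f \<longlongrightarrow> L) (at x within (\<rat> \<inter> cfT B))))"

definition cfBq :: "nat \<Rightarrow> real" where
  "cfBq q = ln (real q) * (ln (ln (real q)))\<^sup>2"

definition frakA :: "nat \<Rightarrow> nat set" where
  "frakA q = {a. a < q \<and> coprime a q \<and> real a / real q \<in> cfT (cfBq q)}"

definition frakT :: "nat \<Rightarrow> real set" where
  "frakT q = ({0..<1} - \<rat>) \<inter> cfT (cfBq q)"

end

theory Submission
  imports Defs "HOL-Analysis.Analysis" "HOL-Real_Asymp.Real_Asymp"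
begin

text \<open>If y \<noteq> z have partial quotients b_1, ..., b_{m+2} bounded by C and
  |y - z| < (C + 1)^{-(2m+2)}, then b_j(y) = b_j(z) for j \<le> m: as long as the expansions agree,
  |y - z| is the distance of the n-th complete quotients times 2n fractional parts, each at least
  1 / (C + 1), and where the expansions first part, the complete quotients are at least
  1 / (2(C + 1)) apart. Hence property S(\<lambda>) makes f uniformly continuous on \<rat> \<inter> T(B), and
  f^* is its continuous extension. For B_q = log q (log log q)^2 and m \<approx> B_q^{1/\<lambda>} one has
  (B_q + 1)^{2m+2} \<le> q^{3/4}, so points of T(B_q) within q^{1/4}/q of a/q share their first m
  partial quotients with it, and S(\<lambda>) bounds the variation of f^* between them.\<close>

section \<open>Complete quotients\<close>

definition cf_frac :: "real \<Rightarrow> nat \<Rightarrow> real" where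
  "cf_frac x j = frac (cf_tail x j)"

lemma cf_frac_nonneg: "0 \<le> cf_frac x j"
  and cf_frac_less_1: "cf_frac x j < 1"
  by (simp_all add: cf_frac_def frac_lt_1)

lemma cf_tail_Suc: "cf_tail x (Suc j) = 1 / cf_frac x j"
  by (simp add: cf_frac_def)

declare cf_tail.simps(2) [simp del]

lemma cf_tail_eq: "cf_tail x j = of_int (cf_b x j) + cf_frac x j"
  by (simp add: cf_frac_def cf_b_def frac_def)

lemma cf_tail_add: "cf_tail x (k + j) = cf_tail (cf_tail x j) k"
  by (induction k) (simp_all add: cf_tail_Suc cf_frac_def)

lemma cf_frac_nonzero:
  assumes "cf_frac x j \<noteq> 0"
  shows "1 < cf_tail x (Suc j)" "1 \<le> cf_b x (Suc j)" "cf_frac x j = 1 / cf_tail x (Suc j)"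
    "1 / (of_int (cf_b x (Suc j)) + 1) \<le> cf_frac x j"
proof -
  have u: "0 < cf_frac x j" "cf_frac x j < 1"
    using assms cf_frac_nonneg[of x j] cf_frac_less_1[of x j] by auto
  show "1 < cf_tail x (Suc j)" using u by (simp add: cf_tail_Suc)
  then show b: "1 \<le> cf_b x (Suc j)" unfolding cf_b_def by linarith
  show "cf_frac x j = 1 / cf_tail x (Suc j)" using u by (simp add: cf_tail_Suc)
  have "cf_tail x (Suc j) < of_int (cf_b x (Suc j)) + 1"
    unfolding cf_b_def by linarith
  then show "1 / (of_int (cf_b x (Suc j)) + 1) \<le> cf_frac x j"
    using u b by (simp add: cf_tail_Suc field_simps)
qed

lemma enat_le_cf_len_iff: "enat n \<le> cf_len x \<longleftrightarrow> (\<forall>j<n. cf_frac x j \<noteq> 0)"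
proof
  assume n: "enat n \<le> cf_len x"
  show "\<forall>j<n. cf_frac x j \<noteq> 0"
  proof (intro allI impI notI)
    fix j assume j: "j < n" "cf_frac x j = 0"
    then have ex: "\<exists>n. frac (cf_tail x n) = 0" by (auto simp: cf_frac_def)
    have "(LEAST n. frac (cf_tail x n) = 0) \<le> j"
      using j by (intro Least_le) (simp add: cf_frac_def)
    then show False using n j ex by (simp add: cf_len_def)
  qed
next
  assume nz: "\<forall>j<n. cf_frac x j \<noteq> 0"
  show "enat n \<le> cf_len x"
  proof (cases "\<exists>n. frac (cf_tail x n) = 0")
    case True
    then have "frac (cf_tail x (LEAST n. frac (cf_tail x n) = 0)) = 0"
      by (rule LeastI_ex)
    then have "\<not> (LEAST n. frac (cf_tail x n) = 0) < n"
      using nz by (auto simp: cf_frac_def)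
    then show ?thesis using True by (simp add: cf_len_def)
  qed (simp add: cf_len_def)
qed

lemma cf_tail_irrational: "x \<notin> \<rat> \<Longrightarrow> cf_tail x j \<notin> \<rat>"
proof (induction j)
  case (Suc j)
  have "cf_frac x j \<notin> \<rat>"
  proof
    assume "cf_frac x j \<in> \<rat>"
    then have "of_int (cf_b x j) + cf_frac x j \<in> \<rat>" by (intro Rats_add) auto
    then show False using Suc by (simp add: cf_tail_eq[symmetric])
  qed
  then show ?case by (auto simp: cf_tail_Suc dest: Rats_divide[OF Rats_1])
qed simp

lemma cf_frac_irrational: "x \<notin> \<rat> \<Longrightarrow> cf_frac x j \<noteq> 0"
  using cf_tail_irrational[of x j] Ints_subset_Rats by (auto simp: cf_frac_def frac_eq_0_iff)

lemma cf_b_irrational: "x \<notin> \<rat> \<Longrightarrow> 1 \<le> j \<Longrightarrow> 1 \<le> cf_b x j"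
  using cf_frac_nonzero(2)[OF cf_frac_irrational, of x "j - 1"] by (cases j) auto

lemma cf_len_irrational: "x \<notin> \<rat> \<Longrightarrow> enat n \<le> cf_len x"
  using cf_frac_irrational by (simp add: enat_le_cf_len_iff)

lemma mult_ln_squared_mono: "1 \<le> (s::real) \<Longrightarrow> s \<le> t \<Longrightarrow> s * (ln s)\<^sup>2 \<le> t * (ln t)\<^sup>2"
  by (intro mult_mono power_mono) auto

lemma cfT_mono: "B \<le> B' \<Longrightarrow> cfT B \<subseteq> cfT B'"
  unfolding cfT_def by force

lemma cfT_quotient_le:
  "x \<in> cfT B \<Longrightarrow> 1 \<le> j \<Longrightarrow> enat j \<le> cf_len x \<Longrightarrow>
     of_int (cf_b x j) \<le> max B (real j * (ln (real j))\<^sup>2)"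
  by (auto simp: cfT_def)

section \<open>Nearby reals with bounded partial quotients\<close>

definition cf_quotients_le :: "real \<Rightarrow> nat \<Rightarrow> real \<Rightarrow> bool" where
  "cf_quotients_le C N y \<longleftrightarrow>
     (\<forall>j. 1 \<le> j \<and> j \<le> N \<and> enat j \<le> cf_len y \<longrightarrow> of_int (cf_b y j) \<le> C)"

lemma cfT_imp_cf_quotients_le:
  assumes y: "y \<in> cfT B" and N: "real N * (ln (real N))\<^sup>2 \<le> B"
  shows "cf_quotients_le B N y"
  unfolding cf_quotients_le_def
proof (intro allI impI)
  fix j assume j: "1 \<le> j \<and> j \<le> N \<and> enat j \<le> cf_len y"
  then have "real j * (ln (real j))\<^sup>2 \<le> B"
    using mult_ln_squared_mono[of "real j" "real N"] N by auto
  then show "of_int (cf_b y j) \<le> B" using cfT_quotient_le[OF y] j by fastforce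
qed

lemma cf_dist_eq:
  assumes "\<forall>j<n. cf_b y j = cf_b z j \<and> cf_frac y j \<noteq> 0 \<and> cf_frac z j \<noteq> 0"
  shows "\<bar>y - z\<bar> = \<bar>cf_tail y n - cf_tail z n\<bar> * (\<Prod>j<n. cf_frac y j * cf_frac z j)"
  using assms
proof (induction n)
  case (Suc n)
  then have b: "cf_b y n = cf_b z n" and u: "cf_frac y n \<noteq> 0" "cf_frac z n \<noteq> 0" by auto
  have "cf_tail y n - cf_tail z n = cf_frac y n - cf_frac z n"
    using b by (simp add: cf_tail_eq)
  also have "\<dots> = (cf_tail z (Suc n) - cf_tail y (Suc n)) * (cf_frac y n * cf_frac z n)"
    using u by (simp add: cf_tail_Suc field_simps)
  finally have "\<bar>cf_tail y n - cf_tail z n\<bar> =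
      \<bar>cf_tail y (Suc n) - cf_tail z (Suc n)\<bar> * (cf_frac y n * cf_frac z n)"
    using cf_frac_nonneg[of y n] cf_frac_nonneg[of z n]
    by (simp add: abs_mult abs_minus_commute)
  then show ?case using Suc by (simp add: mult.assoc)
qed simp

lemma cf_frac_ge:
  assumes nz: "\<forall>i\<le>j. cf_frac y i \<noteq> 0" and C: "cf_quotients_le C N y" and j: "Suc j \<le> N"
  shows "1 / (C + 1) \<le> cf_frac y j"
proof -
  have "enat (Suc j) \<le> cf_len y" using nz by (auto simp: enat_le_cf_len_iff)
  then have bC: "of_int (cf_b y (Suc j)) \<le> C" using C j unfolding cf_quotients_le_def by auto
  have b1: "1 \<le> cf_b y (Suc j)" using cf_frac_nonzero(2) nz by blast
  have "1 / (C + 1) \<le> 1 / (of_int (cf_b y (Suc j)) + 1)"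
    using bC b1 by (intro divide_left_mono) auto
  then show ?thesis using cf_frac_nonzero(4) nz by (meson order.trans order_refl)
qed

text \<open>cf_frac y j is close to 1 only if b_{j+1} = 1 and cf_frac y (j + 1) is small,
  which the bound on b_{j+2} excludes.\<close>
lemma one_minus_cf_frac_ge:
  assumes nz: "\<forall>i\<le>j. cf_frac y i \<noteq> 0" and C: "cf_quotients_le C N y" and j: "j + 2 \<le> N"
  shows "1 / (2 * (C + 1)) \<le> 1 - cf_frac y j"
proof -
  have u: "cf_frac y j = 1 / cf_tail y (Suc j)" and t: "1 < cf_tail y (Suc j)"
    and b1: "1 \<le> cf_b y (Suc j)"
    using cf_frac_nonzero nz by blast+
  have "enat (Suc j) \<le> cf_len y" using nz by (auto simp: enat_le_cf_len_iff)
  then have "of_int (cf_b y (Suc j)) \<le> C" using C j unfolding cf_quotients_le_def by auto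
  then have C0: "0 \<le> C" using b1 by linarith
  show ?thesis
  proof (cases "2 \<le> cf_b y (Suc j)")
    case True
    then have "2 \<le> cf_tail y (Suc j)"
      using cf_tail_eq[of y "Suc j"] cf_frac_nonneg[of y "Suc j"] by linarith
    then have "cf_frac y j \<le> 1 / 2" unfolding u by (intro divide_left_mono) auto
    moreover have "1 / (2 * (C + 1)) \<le> 1 / 2" using C0 by (simp add: field_simps)
    ultimately show ?thesis by linarith
  next
    case False
    define v where "v = cf_frac y (Suc j)"
    have tv: "cf_tail y (Suc j) = 1 + v" using False b1 cf_tail_eq[of y "Suc j"] by (simp add: v_def)
    then have "v \<noteq> 0" using t by auto
    then have "\<forall>i\<le>Suc j. cf_frac y i \<noteq> 0" using nz by (simp add: v_def le_Suc_eq)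
    then have v: "1 / (C + 1) \<le> v" using cf_frac_ge[OF _ C] j by (simp add: v_def)
    have v_range: "0 \<le> v" "v < 1" using cf_frac_nonneg cf_frac_less_1 by (simp_all add: v_def)
    have "1 - cf_frac y j = v / (1 + v)" using u tv v_range by (simp add: field_simps)
    also have "v / 2 \<le> v / (1 + v)" using v_range by (intro divide_left_mono) auto
    finally have "v / 2 \<le> 1 - cf_frac y j" .
    moreover have "1 / (2 * (C + 1)) \<le> v / 2" using divide_right_mono[OF v, of 2] by (simp add: mult.commute)
    ultimately show ?thesis by linarith
  qed
qed

lemma cf_tail_gap_one_sided:
  assumes part: "cf_b y n < cf_b z n \<or> (cf_b y n = cf_b z n \<and> cf_frac z n = 0)"
    and ne: "cf_tail y n \<noteq> cf_tail z n" and nz: "\<forall>j<n. cf_frac y j \<noteq> 0"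
    and C: "cf_quotients_le C N y" "n + 2 \<le> N" "1 \<le> C"
  shows "1 / (2 * (C + 1)) \<le> \<bar>cf_tail y n - cf_tail z n\<bar>"
proof -
  have half: "1 / (2 * (C + 1)) \<le> 1 / (C + 1)" "1 / (C + 1) \<le> 1"
    using C(3) by (simp_all add: field_simps)
  show ?thesis
  proof (cases "cf_frac y n = 0")
    case True
    with part ne have "cf_b y n < cf_b z n" by (auto simp: cf_tail_eq)
    then have "1 \<le> cf_tail z n - cf_tail y n"
      using cf_tail_eq[of y n] cf_tail_eq[of z n] cf_frac_nonneg[of z n] True by linarith
    then have "1 \<le> \<bar>cf_tail y n - cf_tail z n\<bar>" by linarith
    then show ?thesis using half by (meson order_trans)
  next
    case False
    then have nz': "\<forall>i\<le>n. cf_frac y i \<noteq> 0" using nz le_less by auto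
    from part show ?thesis
    proof
      assume "cf_b y n < cf_b z n"
      then have "1 - cf_frac y n \<le> cf_tail z n - cf_tail y n"
        using cf_tail_eq[of y n] cf_tail_eq[of z n] cf_frac_nonneg[of z n] by linarith
      then have "1 - cf_frac y n \<le> \<bar>cf_tail y n - cf_tail z n\<bar>" by linarith
      then show ?thesis using one_minus_cf_frac_ge[OF nz' C(1,2)] by (meson order_trans)
    next
      assume "cf_b y n = cf_b z n \<and> cf_frac z n = 0"
      then have "cf_tail y n - cf_tail z n = cf_frac y n" by (simp add: cf_tail_eq)
      then show ?thesis using cf_frac_ge[OF nz' C(1)] C(2) half by simp
    qed
  qed
qed

lemma cf_tail_gap:
  assumes part: "cf_b y n \<noteq> cf_b z n \<or> cf_frac y n = 0 \<or> cf_frac z n = 0"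
    and ne: "cf_tail y n \<noteq> cf_tail z n"
    and nz: "\<forall>j<n. cf_frac y j \<noteq> 0 \<and> cf_frac z j \<noteq> 0"
    and C: "cf_quotients_le C N y" "cf_quotients_le C N z" "n + 2 \<le> N" "1 \<le> C"
  shows "1 / (2 * (C + 1)) \<le> \<bar>cf_tail y n - cf_tail z n\<bar>"
proof -
  consider "cf_b y n < cf_b z n \<or> (cf_b y n = cf_b z n \<and> cf_frac z n = 0)"
    | "cf_b z n < cf_b y n \<or> (cf_b z n = cf_b y n \<and> cf_frac y n = 0)"
    using part by linarith
  then show ?thesis
  proof cases
    case 1
    then show ?thesis using cf_tail_gap_one_sided[OF 1 ne _ C(1,3,4)] nz by blast
  next
    case 2
    then show ?thesis using cf_tail_gap_one_sided[OF 2 ne[symmetric] _ C(2,3,4)] nz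
      by (simp add: abs_minus_commute)
  qed
qed

lemma cf_dist_ge:
  assumes "y \<noteq> z"
    and agree: "\<forall>j<n. cf_b y j = cf_b z j \<and> cf_frac y j \<noteq> 0 \<and> cf_frac z j \<noteq> 0"
    and part: "cf_b y n \<noteq> cf_b z n \<or> cf_frac y n = 0 \<or> cf_frac z n = 0"
    and C: "cf_quotients_le C N y" "cf_quotients_le C N z" "n + 2 \<le> N" "1 \<le> C"
  shows "(1 / (C + 1)) ^ (2 * n + 2) \<le> \<bar>y - z\<bar>"
proof -
  define c where "c = 1 / (C + 1)"
  have c: "0 < c" using C(4) by (simp add: c_def)
  have dist: "\<bar>y - z\<bar> = \<bar>cf_tail y n - cf_tail z n\<bar> * (\<Prod>j<n. cf_frac y j * cf_frac z j)"
    by (rule cf_dist_eq[OF agree])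
  have "c ^ (2 * n) = (\<Prod>j<n. c * c)" by (simp add: power_mult power2_eq_square)
  also have "\<dots> \<le> (\<Prod>j<n. cf_frac y j * cf_frac z j)"
  proof (rule prod_mono)
    fix j assume "j \<in> {..<n}"
    then have "\<forall>i\<le>j. cf_frac y i \<noteq> 0" "\<forall>i\<le>j. cf_frac z i \<noteq> 0" "Suc j \<le> N"
      using agree C(3) by auto
    then have "c \<le> cf_frac y j" "c \<le> cf_frac z j"
      using cf_frac_ge C(1,2) unfolding c_def by blast+
    then show "0 \<le> c * c \<and> c * c \<le> cf_frac y j * cf_frac z j"
      using c by (auto intro: mult_mono)
  qed
  finally have prod: "c ^ (2 * n) \<le> (\<Prod>j<n. cf_frac y j * cf_frac z j)" .
  have "cf_tail y n \<noteq> cf_tail z n" using dist \<open>y \<noteq> z\<close> by auto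
  then have "1 / (2 * (C + 1)) \<le> \<bar>cf_tail y n - cf_tail z n\<bar>"
    using cf_tail_gap[OF part _ _ C] agree by blast
  moreover have "c * c \<le> 1 / (2 * (C + 1))"
  proof -
    have "2 * (C + 1) \<le> (C + 1) * (C + 1)" using C(4) by (intro mult_right_mono) auto
    then have "1 / ((C + 1) * (C + 1)) \<le> 1 / (2 * (C + 1))" using C(4) by (intro divide_left_mono) auto
    then show ?thesis by (simp add: c_def)
  qed
  ultimately have gap: "c * c \<le> \<bar>cf_tail y n - cf_tail z n\<bar>" by linarith
  have "c ^ (2 * n + 2) = (c * c) * c ^ (2 * n)" by (simp add: power_add power2_eq_square)
  also have "\<dots> \<le> \<bar>y - z\<bar>" unfolding dist using gap prod c by (intro mult_mono) auto
  finally show ?thesis unfolding c_def .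
qed

lemma cf_close_imp_agree:
  assumes "y \<noteq> z" and C: "cf_quotients_le C (m + 2) y" "cf_quotients_le C (m + 2) z" "1 \<le> C"
    and close: "(C + 1) ^ (2 * m + 2) * \<bar>y - z\<bar> < 1"
  shows "(\<forall>j\<le>m. cf_b y j = cf_b z j) \<and> enat m \<le> cf_len y \<and> enat m \<le> cf_len z"
proof -
  define agree where
    "agree j \<longleftrightarrow> cf_b y j = cf_b z j \<and> cf_frac y j \<noteq> 0 \<and> cf_frac z j \<noteq> 0" for j
  have "0 < (C + 1) ^ (2 * m + 2)" using C(3) by simp
  then have far: "\<bar>y - z\<bar> < (1 / (C + 1)) ^ (2 * m + 2)"
    unfolding power_one_over using close by (simp add: pos_less_divide_eq mult.commute)
  have agree_step: "agree n \<or> n = m \<and> cf_b y n = cf_b z n" if "n \<le> m" "\<forall>j<n. agree j" for n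
  proof (rule ccontr)
    assume "\<not> ?thesis"
    then have "cf_b y n \<noteq> cf_b z n \<or> cf_frac y n = 0 \<or> cf_frac z n = 0"
      unfolding agree_def by auto
    then have "(1 / (C + 1)) ^ (2 * n + 2) \<le> \<bar>y - z\<bar>"
      using cf_dist_ge[OF \<open>y \<noteq> z\<close>, of n C "m + 2"] that C unfolding agree_def by auto
    moreover have "(1 / (C + 1)) ^ (2 * m + 2) \<le> (1 / (C + 1)) ^ (2 * n + 2)"
      using that C(3) by (intro power_decreasing) auto
    ultimately show False using far by linarith
  qed
  have agree_below: "\<forall>j<n. agree j" if "n \<le> m" for n
    using that
  proof (induction n)
    case (Suc n)
    then show ?case using agree_step[of n] by (auto simp: agree_def less_Suc_eq)
  qed simp
  have "\<forall>j<m. agree j" using agree_below[of m] by simp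
  then have "enat m \<le> cf_len y \<and> enat m \<le> cf_len z"
    by (simp add: agree_def enat_le_cf_len_iff)
  moreover have "\<forall>j\<le>m. cf_b y j = cf_b z j"
    using \<open>\<forall>j<m. agree j\<close> agree_step[of m] by (auto simp: agree_def le_less)
  ultimately show ?thesis by blast
qed

section \<open>Rational truncations\<close>

text \<open>The value [c_0; c_1, ..., c_k, 2]. Ending in 2 rather than in c_k makes c_0, ..., c_k
  partial quotients of the value with nonzero fractional parts, whatever c_k is.\<close>
fun cf_eval :: "int list \<Rightarrow> real" where
  "cf_eval [] = 2"
| "cf_eval (c # cs) = of_int c + 1 / cf_eval cs"

lemma cf_eval_gt_1: "\<forall>c\<in>set cs. 1 \<le> c \<Longrightarrow> 1 < cf_eval cs"
proof (induction cs)
  case (Cons c cs)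
  then have "0 < 1 / cf_eval cs" "1 \<le> (of_int c :: real)" by auto
  then have "1 < of_int c + 1 / cf_eval cs" by linarith
  then show ?case by simp
qed simp

lemma cf_eval_rational: "cf_eval cs \<in> \<rat>"
  by (induction cs) auto

lemma cf_eval_Cons:
  assumes "\<forall>c\<in>set cs. 1 \<le> c"
  shows "cf_b (cf_eval (c # cs)) 0 = c" "cf_frac (cf_eval (c # cs)) 0 \<noteq> 0"
    "cf_tail (cf_eval (c # cs)) (Suc k) = cf_tail (cf_eval cs) k"
proof -
  have w: "0 < 1 / cf_eval cs" "1 / cf_eval cs < 1" using cf_eval_gt_1[OF assms] by auto
  then have fr: "cf_frac (cf_eval (c # cs)) 0 = 1 / cf_eval cs" by (simp add: cf_frac_def frac_eq)
  then show "cf_frac (cf_eval (c # cs)) 0 \<noteq> 0" using w by simp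
  show "cf_b (cf_eval (c # cs)) 0 = c" using w by (simp add: cf_b_def floor_eq_iff)
  have "cf_tail (cf_eval (c # cs)) 1 = cf_eval cs" using fr by (simp add: cf_tail_Suc)
  then show "cf_tail (cf_eval (c # cs)) (Suc k) = cf_tail (cf_eval cs) k"
    using cf_tail_add[of "cf_eval (c # cs)" k 1] by simp
qed

lemma cf_eval_expansion:
  assumes "\<forall>c\<in>set cs. 1 \<le> c"
  shows "(\<forall>k\<le>length cs. cf_b (cf_eval (c # cs)) k = (c # cs) ! k \<and> cf_frac (cf_eval (c # cs)) k \<noteq> 0)
    \<and> cf_tail (cf_eval (c # cs)) (Suc (length cs)) = 2"
  using assms
proof (induction cs arbitrary: c)
  case Nil
  then show ?case using cf_eval_Cons[of "[]" c] by simp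
next
  case (Cons d cs)
  have shift: "cf_b (cf_eval (c # d # cs)) (Suc k) = cf_b (cf_eval (d # cs)) k"
    "cf_frac (cf_eval (c # d # cs)) (Suc k) = cf_frac (cf_eval (d # cs)) k" for k
    using cf_eval_Cons(3)[OF Cons.prems] by (simp_all add: cf_b_def cf_frac_def)
  have IH: "\<forall>k\<le>length cs. cf_b (cf_eval (d # cs)) k = (d # cs) ! k \<and> cf_frac (cf_eval (d # cs)) k \<noteq> 0"
    "cf_tail (cf_eval (d # cs)) (Suc (length cs)) = 2"
    using Cons by auto
  have "\<forall>k\<le>length (d # cs). cf_b (cf_eval (c # d # cs)) k = (c # d # cs) ! k
      \<and> cf_frac (cf_eval (c # d # cs)) k \<noteq> 0"
  proof (intro allI impI)
    fix k assume "k \<le> length (d # cs)"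
    then show "cf_b (cf_eval (c # d # cs)) k = (c # d # cs) ! k \<and> cf_frac (cf_eval (c # d # cs)) k \<noteq> 0"
      using IH(1) cf_eval_Cons(1,2)[OF Cons.prems] by (cases k) (auto simp: shift simp del: cf_eval.simps)
  qed
  then show ?case using IH(2) cf_eval_Cons(3)[OF Cons.prems] by simp
qed

definition cf_trunc :: "real \<Rightarrow> nat \<Rightarrow> real" where
  "cf_trunc x n = cf_eval (map (cf_b x) [0..<Suc n])"

lemma cf_trunc_rational: "cf_trunc x n \<in> \<rat>"
  by (simp add: cf_trunc_def cf_eval_rational)

lemma cf_trunc_expansion:
  assumes x: "x \<notin> \<rat>"
  shows "(\<forall>k\<le>n. cf_b (cf_trunc x n) k = cf_b x k \<and> cf_frac (cf_trunc x n) k \<noteq> 0)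
    \<and> cf_tail (cf_trunc x n) (Suc n) = 2"
proof -
  define cs where "cs = map (cf_b x) [1..<Suc n]"
  have list: "cf_b x 0 # cs = map (cf_b x) [0..<Suc n]" by (simp add: cs_def upt_conv_Cons del: upt_Suc)
  have "\<forall>c\<in>set cs. 1 \<le> c" using cf_b_irrational[OF x] by (auto simp: cs_def)
  from cf_eval_expansion[OF this, of "cf_b x 0"] show ?thesis
    unfolding list cf_trunc_def[symmetric] by (simp add: cs_def del: upt_Suc)
qed

lemma cf_trunc_len:
  assumes x: "x \<notin> \<rat>"
  shows "cf_len (cf_trunc x n) = enat (Suc n)"
proof -
  have last: "frac (cf_tail (cf_trunc x n) (Suc n)) = 0" using cf_trunc_expansion[OF x] by simp
  have "(LEAST k. frac (cf_tail (cf_trunc x n) k) = 0) = Suc n"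
  proof (rule Least_equality)
    fix k assume k: "frac (cf_tail (cf_trunc x n) k) = 0"
    show "Suc n \<le> k"
    proof (rule ccontr)
      assume "\<not> Suc n \<le> k"
      then have "cf_frac (cf_trunc x n) k \<noteq> 0" using cf_trunc_expansion[OF x] by simp
      then show False using k by (simp add: cf_frac_def)
    qed
  qed (rule last)
  then show ?thesis using last unfolding cf_len_def by auto
qed

lemma cf_trunc_in_cfT:
  assumes x: "x \<notin> \<rat>" "x \<in> cfT B" and n: "2 \<le> n"
  shows "cf_trunc x n \<in> cfT B"
  unfolding cfT_def
proof (intro CollectI allI impI)
  fix j assume j: "1 \<le> j \<and> enat j \<le> cf_len (cf_trunc x n)"
  then have "j \<le> Suc n" using cf_trunc_len[OF x(1)] by simp
  then consider "j \<le> n" | "j = Suc n" by linarith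
  then show "of_int (cf_b (cf_trunc x n) j) \<le> max B (real j * (ln (real j))\<^sup>2)"
  proof cases
    case 1
    then have "cf_b (cf_trunc x n) j = cf_b x j" using cf_trunc_expansion[OF x(1)] by blast
    moreover have "of_int (cf_b x j) \<le> max B (real j * (ln (real j))\<^sup>2)"
      using cfT_quotient_le[OF x(2)] cf_len_irrational[OF x(1)] j by blast
    ultimately show ?thesis by simp
  next
    case 2
    have "cf_b (cf_trunc x n) j = 2" using cf_trunc_expansion[OF x(1)] 2 by (simp add: cf_b_def)
    moreover have "1 \<le> ln (3::real)" using exp_le by (simp add: ln_ge_iff)
    then have "3 \<le> 3 * (ln (3::real))\<^sup>2" by (simp add: one_le_power)
    moreover have "3 * (ln (3::real))\<^sup>2 \<le> real j * (ln (real j))\<^sup>2"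
      using 2 n by (intro mult_ln_squared_mono) auto
    ultimately show ?thesis by simp
  qed
qed

lemma cf_frac_mult_Suc_le: "cf_frac x j * cf_frac x (Suc j) \<le> 1 / 2"
proof (cases "cf_frac x j = 0")
  case False
  define v where "v = cf_frac x (Suc j)"
  have v: "0 \<le> v" "v < 1" using cf_frac_nonneg cf_frac_less_1 by (simp_all add: v_def)
  have "cf_frac x j = 1 / (of_int (cf_b x (Suc j)) + v)"
    using cf_frac_nonzero(3)[OF False] cf_tail_eq[of x "Suc j"] by (simp add: v_def)
  also have "\<dots> \<le> 1 / (1 + v)" using cf_frac_nonzero(2)[OF False] v by (intro divide_left_mono) auto
  finally have "cf_frac x j * v \<le> 1 / (1 + v) * v" using v by (intro mult_right_mono)
  also have "\<dots> \<le> 1 / 2" using v by (simp add: field_simps)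
  finally show ?thesis by (simp add: v_def)
qed simp

lemma prod_cf_frac_le: "(\<Prod>j<n. cf_frac x j) \<le> (1 / 2) ^ (n div 2)"
proof (induction n rule: less_induct)
  case (less n)
  show ?case
  proof (cases "n < 2")
    case True
    have "(\<Prod>j<n. cf_frac x j) \<le> 1"
      using cf_frac_nonneg cf_frac_less_1 by (intro prod_le_1) (auto simp: less_imp_le)
    then show ?thesis using True by simp
  next
    case False
    then obtain k where k: "n = Suc (Suc k)" by (metis add_2_eq_Suc le_Suc_ex not_less)
    have "(\<Prod>j<n. cf_frac x j) = (\<Prod>j<k. cf_frac x j) * (cf_frac x k * cf_frac x (Suc k))"
      unfolding k by (simp add: mult.assoc)
    also have "\<dots> \<le> (1 / 2) ^ (k div 2) * (1 / 2)"
      using less.IH[of k] k cf_frac_mult_Suc_le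
      by (intro mult_mono mult_nonneg_nonneg cf_frac_nonneg) auto
    also have "\<dots> = (1 / 2) ^ (n div 2)" unfolding k by simp
    finally show ?thesis .
  qed
qed

lemma cf_trunc_dist:
  assumes x: "x \<notin> \<rat>"
  shows "\<bar>cf_trunc x n - x\<bar> \<le> (1 / 2) ^ (n div 2)"
proof -
  define y where "y = cf_trunc x n"
  have agree: "\<forall>j<n. cf_b y j = cf_b x j \<and> cf_frac y j \<noteq> 0 \<and> cf_frac x j \<noteq> 0"
    using cf_trunc_expansion[OF x] cf_frac_irrational[OF x] by (simp add: y_def)
  have "\<bar>cf_tail y n - cf_tail x n\<bar> = \<bar>cf_frac y n - cf_frac x n\<bar>"
    using cf_trunc_expansion[OF x] by (simp add: y_def cf_tail_eq)
  also have "\<dots> \<le> 1"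
    using cf_frac_nonneg[of y n] cf_frac_less_1[of y n] cf_frac_nonneg[of x n] cf_frac_less_1[of x n]
    by linarith
  finally have tail: "\<bar>cf_tail y n - cf_tail x n\<bar> \<le> 1" .
  have prod: "(\<Prod>j<n. cf_frac y j * cf_frac x j) \<le> (\<Prod>j<n. cf_frac x j)"
  proof (rule prod_mono)
    fix j
    show "0 \<le> cf_frac y j * cf_frac x j \<and> cf_frac y j * cf_frac x j \<le> cf_frac x j"
      using cf_frac_nonneg[of y j] cf_frac_nonneg[of x j] cf_frac_less_1[of y j]
      by (simp add: mult_left_le_one_le)
  qed
  have "\<bar>y - x\<bar> \<le> 1 * (\<Prod>j<n. cf_frac x j)"
    unfolding cf_dist_eq[OF agree] using tail prod
    by (intro mult_mono prod_nonneg ballI mult_nonneg_nonneg cf_frac_nonneg) auto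
  also have "\<dots> \<le> (1 / 2) ^ (n div 2)" using prod_cf_frac_le by simp
  finally show ?thesis by (simp add: y_def)
qed

lemma cf_trunc_tendsto:
  assumes "x \<notin> \<rat>"
  shows "cf_trunc x \<longlonglongrightarrow> x"
proof -
  have "filterlim (\<lambda>n::nat. n div 2) sequentially sequentially"
    unfolding filterlim_at_top eventually_sequentially
  proof
    fix k :: nat
    show "\<exists>N. \<forall>n\<ge>N. k \<le> n div 2" by (rule exI[of _ "2 * k"]) auto
  qed
  from filterlim_compose[OF LIMSEQ_power_zero[of "1 / 2 :: real"] this]
  have "(\<lambda>n. (1 / 2 :: real) ^ (n div 2)) \<longlonglongrightarrow> 0" by simp
  then have "(\<lambda>n. cf_trunc x n - x) \<longlonglongrightarrow> 0"
  proof (rule Lim_null_comparison[OF always_eventually, rotated])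
    show "\<forall>n. norm (cf_trunc x n - x) \<le> (1 / 2) ^ (n div 2)" using cf_trunc_dist[OF assms] by simp
  qed
  then show ?thesis by (simp add: LIM_zero_iff)
qed

lemma cf_trunc_filterlim:
  assumes "x \<notin> \<rat>" "x \<in> cfT B"
  shows "filterlim (cf_trunc x) (at x within \<rat> \<inter> cfT B) sequentially"
  unfolding filterlim_at
proof
  show "\<forall>\<^sub>F n in sequentially. cf_trunc x n \<in> \<rat> \<inter> cfT B \<and> cf_trunc x n \<noteq> x"
    using eventually_ge_at_top[of 2]
  proof (rule eventually_mono)
    fix n :: nat assume "2 \<le> n"
    then show "cf_trunc x n \<in> \<rat> \<inter> cfT B \<and> cf_trunc x n \<noteq> x"
      using cf_trunc_in_cfT[OF assms] cf_trunc_rational[of x n] assms(1) by auto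
  qed
qed (rule cf_trunc_tendsto[OF assms(1)])

lemma at_within_cfT_neq_bot:
  assumes "x \<notin> \<rat>" "x \<in> cfT B"
  shows "at x within \<rat> \<inter> cfT B \<noteq> bot"
  using cf_trunc_filterlim[OF assms] by (metis filterlim_def filtermap_bot_iff le_bot sequentially_bot)

section \<open>Property S and the extension f^*\<close>

definition cf_osc_lt :: "(real \<Rightarrow> complex) \<Rightarrow> real \<Rightarrow> nat \<Rightarrow> real \<Rightarrow> bool" where
  "cf_osc_lt f lam m e \<longleftrightarrow>
     (\<forall>x\<in>cfT (real m powr lam). \<forall>x'\<in>cfV (real m powr lam) m x. \<forall>x''\<in>cfV (real m powr lam) m x.
        cmod (f x' - f x'') < e)"

lemma propS_eventually_cf_osc_lt:
  assumes "propS lam f" "0 < e"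
  shows "\<forall>\<^sub>F m in sequentially. cf_osc_lt f lam m e"
proof -
  define S where "S m = (SUP x\<in>cfT (real m powr lam).
      SUP p\<in>cfV (real m powr lam) m x \<times> cfV (real m powr lam) m x.
        ereal (cmod (f (fst p) - f (snd p))))" for m :: nat
  have "S \<longlonglongrightarrow> 0" using assms(1) unfolding propS_def S_def by simp
  then have "\<forall>\<^sub>F m in sequentially. S m < ereal e" using assms(2) by (intro order_tendstoD(2)) auto
  then show ?thesis
  proof (rule eventually_mono)
    fix m assume less: "S m < ereal e"
    show "cf_osc_lt f lam m e" unfolding cf_osc_lt_def
    proof (intro ballI)
      fix x x' x'' assume x: "x \<in> cfT (real m powr lam)"
        and x': "x' \<in> cfV (real m powr lam) m x" and x'': "x'' \<in> cfV (real m powr lam) m x"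
      have "ereal (cmod (f x' - f x'')) \<le> S m"
        unfolding S_def using x x' x''
        by (intro SUP_upper2[OF x] SUP_upper2[of "(x', x'')"]) auto
      then have "ereal (cmod (f x' - f x'')) < ereal e" using less by (rule le_less_trans)
      then show "cmod (f x' - f x'') < e" by simp
    qed
  qed
qed

text \<open>Scales at which points of T(B) less than r apart share their first m partial quotients
  (by cf_close_imp_agree) and T(B) is contained in T(m^lam).\<close>
definition cf_admissible :: "real \<Rightarrow> nat \<Rightarrow> real \<Rightarrow> real \<Rightarrow> bool" where
  "cf_admissible lam m B r \<longleftrightarrow> 1 \<le> B \<and> B \<le> real m powr lam \<and>
     real (m + 2) * (ln (real (m + 2)))\<^sup>2 \<le> B \<and> (B + 1) ^ (2 * m + 2) * r \<le> 1"

lemma cf_osc_lt_close: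
  assumes osc: "cf_osc_lt f lam m e" and "0 < e" and adm: "cf_admissible lam m B r"
    and y: "y \<in> \<rat> \<inter> cfT B" and z: "z \<in> \<rat> \<inter> cfT B" and yz: "\<bar>y - z\<bar> < r"
  shows "cmod (f y - f z) < e"
proof (cases "y = z")
  case False
  have B: "1 \<le> B" "B \<le> real m powr lam" "real (m + 2) * (ln (real (m + 2)))\<^sup>2 \<le> B"
    and r: "(B + 1) ^ (2 * m + 2) * r \<le> 1"
    using adm by (simp_all add: cf_admissible_def)
  have "(B + 1) ^ (2 * m + 2) * \<bar>y - z\<bar> < (B + 1) ^ (2 * m + 2) * r"
    using yz B(1) by (intro mult_strict_left_mono) auto
  with r have close: "(B + 1) ^ (2 * m + 2) * \<bar>y - z\<bar> < 1" by linarith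
  have "(\<forall>j\<le>m. cf_b y j = cf_b z j) \<and> enat m \<le> cf_len y \<and> enat m \<le> cf_len z"
    using y z B by (intro cf_close_imp_agree[OF False _ _ _ close] cfT_imp_cf_quotients_le) auto
  moreover have "cfT B \<subseteq> cfT (real m powr lam)" using B(2) by (rule cfT_mono)
  ultimately have "z \<in> cfT (real m powr lam)" "y \<in> cfV (real m powr lam) m z" "z \<in> cfV (real m powr lam) m z"
    using y z unfolding cfV_def by auto
  then show ?thesis using osc unfolding cf_osc_lt_def by blast
qed (simp add: \<open>0 < e\<close>)

lemma propS_uniformly_continuous_on:
  assumes "1 < lam" "propS lam f"
  shows "uniformly_continuous_on (\<rat> \<inter> cfT B) f"
  unfolding uniformly_continuous_on_def
proof (intro allI impI)
  fix e :: real assume "0 < e"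
  have "\<forall>\<^sub>F m in sequentially. B \<le> real m powr lam \<and> 1 \<le> real m powr lam
      \<and> real (m + 2) * (ln (real (m + 2)))\<^sup>2 \<le> real m powr lam"
    using assms(1) by (intro eventually_conj; real_asymp)
  with propS_eventually_cf_osc_lt[OF assms(2) \<open>0 < e\<close>]
  obtain m where m: "cf_osc_lt f lam m e" "B \<le> real m powr lam" "1 \<le> real m powr lam"
      "real (m + 2) * (ln (real (m + 2)))\<^sup>2 \<le> real m powr lam"
    using eventually_happens'[OF sequentially_bot eventually_conj] by blast
  define B' where "B' = max 1 (max B (real (m + 2) * (ln (real (m + 2)))\<^sup>2))"
  have "1 \<le> B'" by (simp add: B'_def)
  then have adm: "cf_admissible lam m B' (1 / (B' + 1) ^ (2 * m + 2))"
    using m by (auto simp: cf_admissible_def B'_def)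
  have "cfT B \<subseteq> cfT B'" by (rule cfT_mono) (simp add: B'_def)
  then have sub: "\<rat> \<inter> cfT B \<subseteq> \<rat> \<inter> cfT B'" by blast
  show "\<exists>d>0. \<forall>y\<in>\<rat> \<inter> cfT B. \<forall>z\<in>\<rat> \<inter> cfT B. dist z y < d \<longrightarrow> dist (f z) (f y) < e"
  proof (intro exI conjI ballI impI)
    show "0 < 1 / (B' + 1) ^ (2 * m + 2)" using \<open>1 \<le> B'\<close> by simp
    fix y z assume "y \<in> \<rat> \<inter> cfT B" "z \<in> \<rat> \<inter> cfT B" and yz: "dist z y < 1 / (B' + 1) ^ (2 * m + 2)"
    then have zy: "z \<in> \<rat> \<inter> cfT B'" "y \<in> \<rat> \<inter> cfT B'" using sub by auto
    from cf_osc_lt_close[OF m(1) \<open>0 < e\<close> adm zy] yz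
    have "cmod (f z - f y) < e" by (simp add: dist_real_def)
    then show "dist (f z) (f y) < e" by (simp add: dist_norm)
  qed
qed

lemma f_star_tendsto:
  assumes lam: "1 < lam" "propS lam f" and x: "x \<notin> \<rat>" "x \<in> cfT B" and "0 < B"
  shows "(f \<longlongrightarrow> f_star f x) (at x within \<rat> \<inter> cfT B)"
proof -
  have "\<rat> \<inter> cfT B - {x} = \<rat> \<inter> cfT B" using x(1) by blast
  then have "x \<in> closure (\<rat> \<inter> cfT B)"
    using at_within_cfT_neq_bot[OF x] not_trivial_limit_within by metis
  then obtain L where L: "(f \<longlongrightarrow> L) (at x within \<rat> \<inter> cfT B)"
    by (rule uniformly_continuous_on_extension_at_closure[OF propS_uniformly_continuous_on[OF lam]])
  txt \<open>The truncations of x lie in every T(B') containing x, so the limit does not depend on B'.\<close>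
  have unique: "L' = L" if "x \<in> cfT B'" "(f \<longlongrightarrow> L') (at x within \<rat> \<inter> cfT B')" for B' L'
  proof -
    have "(\<lambda>n. f (cf_trunc x n)) \<longlonglongrightarrow> L'"
      using filterlim_compose[OF that(2) cf_trunc_filterlim[OF x(1) that(1)]] .
    moreover have "(\<lambda>n. f (cf_trunc x n)) \<longlonglongrightarrow> L"
      using filterlim_compose[OF L cf_trunc_filterlim[OF x]] .
    ultimately show ?thesis by (rule LIMSEQ_unique)
  qed
  have "(THE L. \<exists>B>0. x \<in> cfT B \<and> (f \<longlongrightarrow> L) (at x within \<rat> \<inter> cfT B)) = L"
    using \<open>0 < B\<close> x(2) L unique by (intro the_equality) blast+
  then have "f_star f x = L" using x(1) by (simp add: f_star_def)
  then show ?thesis using L by simp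
qed

lemma f_star_dist_le:
  assumes lam: "1 < lam" "propS lam f" and "0 < B"
    and z: "z \<in> \<rat>" and x: "x \<in> cfT B" "\<bar>z - x\<bar> < r"
    and near: "\<forall>y\<in>\<rat> \<inter> cfT B. \<bar>z - y\<bar> < r \<longrightarrow> cmod (f z - f y) \<le> e"
  shows "cmod (f_star f z - f_star f x) \<le> e"
proof (cases "x \<in> \<rat>")
  case True
  then show ?thesis using near x z by (simp add: f_star_def)
next
  case False
  have "((\<lambda>y. f z - f y) \<longlongrightarrow> f z - f_star f x) (at x within \<rat> \<inter> cfT B)"
    using f_star_tendsto[OF lam False x(1) \<open>0 < B\<close>] by (intro tendsto_intros)
  moreover have "\<forall>\<^sub>F y in at x within \<rat> \<inter> cfT B. cmod (f z - f y) \<le> e"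
    unfolding eventually_at
  proof (intro exI conjI ballI impI)
    show "0 < r - \<bar>z - x\<bar>" using x(2) by simp
    fix y assume "y \<in> \<rat> \<inter> cfT B" "y \<noteq> x \<and> dist y x < r - \<bar>z - x\<bar>"
    then show "cmod (f z - f y) \<le> e" using near by (auto simp: dist_real_def)
  qed
  ultimately have "cmod (f z - f_star f x) \<le> e"
    using at_within_cfT_neq_bot[OF False x(1)] by (intro Lim_norm_ubound) auto
  then show ?thesis using z by (simp add: f_star_def)
qed

text \<open>With m = \<lceil>B_q^{1/\<lambda>}\<rceil> we get (B_q + 1)^{2m+2} = exp (O (B_q^{1/\<lambda>} log B_q)),
  which is q^{o(1)}.\<close>
lemma cfBq_parameters:
  assumes "1 < lam"
  shows "\<forall>\<^sub>F q in sequentially. \<exists>m\<ge>M. cf_admissible lam m (cfBq q) (real q powr (1 / 4) / real q)"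
proof -
  define e where "e = 1 / lam"
  have e: "0 < e" "e < 1" "e * lam = 1" using assms by (auto simp: e_def)
  define BB where "BB t = ln t * (ln (ln t))\<^sup>2" for t :: real
  have "\<forall>\<^sub>F t in at_top. 1 \<le> t \<and> 1 \<le> BB t \<and> real M \<le> BB t powr e \<and>
      (BB t powr e + 3) * (ln (BB t powr e + 3))\<^sup>2 \<le> BB t \<and>
      (2 * BB t powr e + 4) * ln (BB t + 1) \<le> 3 / 4 * ln t"
    unfolding BB_def using e by (intro eventually_conj; real_asymp)
  from eventually_compose_filterlim[OF this filterlim_real_sequentially]
  show ?thesis
  proof (rule eventually_mono)
    fix q :: nat
    define B where "B = cfBq q"
    assume "1 \<le> real q \<and> 1 \<le> BB (real q) \<and> real M \<le> BB (real q) powr e \<and>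
      (BB (real q) powr e + 3) * (ln (BB (real q) powr e + 3))\<^sup>2 \<le> BB (real q) \<and>
      (2 * BB (real q) powr e + 4) * ln (BB (real q) + 1) \<le> 3 / 4 * ln (real q)"
    then have q: "1 \<le> real q" and B: "1 \<le> B" "real M \<le> B powr e"
      "(B powr e + 3) * (ln (B powr e + 3))\<^sup>2 \<le> B" "(2 * B powr e + 4) * ln (B + 1) \<le> 3 / 4 * ln (real q)"
      by (simp_all add: B_def BB_def cfBq_def)
    define m where "m = nat \<lceil>B powr e\<rceil>"
    have "real m = of_int \<lceil>B powr e\<rceil>" unfolding m_def by simp
    then have m: "B powr e \<le> real m" "real m \<le> B powr e + 1" by linarith+
    show "\<exists>m\<ge>M. cf_admissible lam m (cfBq q) (real q powr (1 / 4) / real q)"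
      unfolding B_def[symmetric] cf_admissible_def
    proof (intro exI conjI)
      show "M \<le> m" using B(2) m(1) by linarith
      show "1 \<le> B" by (fact B(1))
      have "B = (B powr e) powr lam" using B(1) e by (simp add: powr_powr)
      also have "\<dots> \<le> real m powr lam" using m(1) assms by (intro powr_mono2) auto
      finally show "B \<le> real m powr lam" .
      have "real (m + 2) * (ln (real (m + 2)))\<^sup>2 \<le> (B powr e + 3) * (ln (B powr e + 3))\<^sup>2"
        using m(2) by (intro mult_ln_squared_mono) auto
      then show "real (m + 2) * (ln (real (m + 2)))\<^sup>2 \<le> B" using B(3) by linarith
      have "ln ((B + 1) ^ (2 * m + 2)) = real (2 * m + 2) * ln (B + 1)"
        using B(1) by (intro ln_realpow)
      also have "\<dots> \<le> (2 * B powr e + 4) * ln (B + 1)"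
        using m(2) B(1) by (intro mult_right_mono) auto
      also have "\<dots> \<le> ln (real q powr (3 / 4))" using B(4) q by (simp add: ln_powr)
      finally have "(B + 1) ^ (2 * m + 2) \<le> real q powr (3 / 4)"
        using B(1) q by (subst (asm) ln_le_cancel_iff) auto
      then have "(B + 1) ^ (2 * m + 2) * (real q powr (1 / 4) / real q)
          \<le> real q powr (3 / 4) * (real q powr (1 / 4) / real q)"
        by (intro mult_right_mono) auto
      also have "\<dots> = 1" using q by (simp flip: powr_add)
      finally show "(B + 1) ^ (2 * m + 2) * (real q powr (1 / 4) / real q) \<le> 1" .
    qed
  qed
qed

theorem lemma3p3:
  fixes f :: "real \<Rightarrow> complex"
  assumes "\<exists>lam>1. propS lam f"
  shows "\<forall>\<epsilon>>0. \<forall>\<^sub>F q in sequentially. \<forall>a\<in>frakA q.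
           \<forall>x\<in>{(real a - real q powr (1/4)) / real q <..< (real a + real q powr (1/4)) / real q}
                 \<inter> (frakT q \<union> (\<lambda>b. real b / real q) ` frakA q).
             cmod (f_star f (real a / real q) - f_star f x) \<le> \<epsilon>"
proof (intro allI impI)
  fix \<epsilon> :: real assume "0 < \<epsilon>"
  obtain lam where lam: "1 < lam" "propS lam f" using assms by blast
  obtain M where M: "\<And>m. M \<le> m \<Longrightarrow> cf_osc_lt f lam m \<epsilon>"
    using propS_eventually_cf_osc_lt[OF lam(2) \<open>0 < \<epsilon>\<close>] by (auto simp: eventually_sequentially)
  show "\<forall>\<^sub>F q in sequentially. \<forall>a\<in>frakA q.
           \<forall>x\<in>{(real a - real q powr (1/4)) / real q <..< (real a + real q powr (1/4)) / real q}
                 \<inter> (frakT q \<union> (\<lambda>b. real b / real q) ` frakA q).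
             cmod (f_star f (real a / real q) - f_star f x) \<le> \<epsilon>"
    using cfBq_parameters[OF lam(1), of M]
  proof (rule eventually_mono, intro ballI)
    fix q a x
    assume "\<exists>m\<ge>M. cf_admissible lam m (cfBq q) (real q powr (1 / 4) / real q)"
    then obtain m where "M \<le> m" and adm: "cf_admissible lam m (cfBq q) (real q powr (1 / 4) / real q)"
      by blast
    assume a: "a \<in> frakA q" and x: "x \<in> {(real a - real q powr (1/4)) / real q <..< (real a + real q powr (1/4)) / real q}
                 \<inter> (frakT q \<union> (\<lambda>b. real b / real q) ` frakA q)"
    have B: "1 \<le> cfBq q" using adm by (simp add: cf_admissible_def)
    then have "0 < q" by (cases q) (simp_all add: cfBq_def)
    then have "\<bar>real a / real q - x\<bar> < real q powr (1 / 4) / real q"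
      using x by (auto simp: abs_less_iff field_simps)
    moreover have "real a / real q \<in> \<rat> \<inter> cfT (cfBq q)" "x \<in> cfT (cfBq q)"
      using a x by (auto simp: frakA_def frakT_def)
    ultimately show "cmod (f_star f (real a / real q) - f_star f x) \<le> \<epsilon>"
      using cf_osc_lt_close[OF M[OF \<open>M \<le> m\<close>] \<open>0 < \<epsilon>\<close> adm] B
      by (intro f_star_dist_le[OF lam, of "cfBq q"]) (auto intro: less_imp_le)
  qed
qed

end
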